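(* Let $n\ge 1$, $A\in\mathbb{R}^{n\times n}$ and $C\in\mathbb{R}^{1\times n}$. Assume that $(A,C)$ is an observable pair, that all eigenvalues of $A$ are nonzero, that all eigenvalues of $A$ are real, and that $(A^2,C)$ is an observable pair. Then for any $2n-1$ distinct nonnegative integers $t_1,\ldots,t_{2n-1}$, the matrix whose rows are $CA^{t_1},CA^{t_2},\ldots,CA^{t_{2n-1}}$ has rank $n$.
   Context: The setting is a linear time-invariant discrete-time single-output system $x(t+1)=Ax(t)+Bu(t)$, $y(t)=Cx(t)+Du(t)$, whose output is measured only at selected time instances $t_1,\ldots,t_l\in\{0,1,2,\ldots\}$. The system is called sample-based observable for these instances if the sample-based observability matrix, i.e. the $l\times n$ matrix with rows $CA^{t_1},\ldots,CA^{t_l}$, has rank $n$. A pair $(M,C)$ with $M\in\mathbb{R}^{n\times n}$ is observable if the matrix with rows $C,CM,\ldots,CM^{n-1}$ has rank $n$. *)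

theory Defs
  imports "Jordan_Normal_Form.DL_Rank" "Jordan_Normal_Form.Char_Poly"
begin

definition sample_obs_mat :: "real mat \<Rightarrow> real mat \<Rightarrow> nat \<Rightarrow> (nat \<Rightarrow> nat) \<Rightarrow> real mat" where
  "sample_obs_mat A C l t = mat_of_rows (dim_col A) [row (C * (A ^\<^sub>m t i)) 0. i \<leftarrow> [0..<l]]"

definition mat_rank :: "real mat \<Rightarrow> nat" where
  "mat_rank M = vec_space.rank (dim_row M) M"

definition observable_pair :: "real mat \<Rightarrow> real mat \<Rightarrow> bool" where
  "observable_pair M C \<longleftrightarrow> mat_rank (sample_obs_mat M C (dim_row M) (\<lambda>k. k)) = dim_row M"

end

theory Submission
  imports Defs "Jordan_Normal_Form.Schur_Decomposition"
begin

(* Let v lie in the kernel of the sample-based observability matrix and put y s = C A^s v.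
  Triangularising A (its eigenvalues are real) shows that y satisfies the linear recurrence whose
  characteristic roots are the eigenvalues l_1, ..., l_n of A; hence its even and its odd
  subsequence satisfy the recurrence with the positive roots l_i^2. By a discrete Rolle argument,
  a solution of such a recurrence of order n that vanishes at n points vanishes identically.
  Among 2n - 1 distinct sample times n have the same parity, so C (A^2)^s w = 0 for all s, where
  w = v or w = A v. Observability of (A^2, C) gives w = 0, and v = 0 since A is nonsingular. *)

(* annihilated [m_1, ..., m_k] g: the difference operator (E - m_k) ... (E - m_1), where
  (E g) s = g (Suc s), maps g to 0, i.e. g solves the recurrence with characteristic roots m_i. *)
fun annihilated :: "real list \<Rightarrow> (nat \<Rightarrow> real) \<Rightarrow> bool" where
  "annihilated [] g \<longleftrightarrow> (\<forall>s. g s = 0)"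
| "annihilated (m # ms) g \<longleftrightarrow> annihilated ms (\<lambda>s. g (Suc s) - m * g s)"

lemma annihilated_smult: "annihilated ms g \<Longrightarrow> annihilated ms (\<lambda>s. c * g s)"
proof (induction ms arbitrary: g)
  case (Cons m ms)
  then have "annihilated ms (\<lambda>s. c * (g (Suc s) - m * g s))" by simp
  then show ?case by (simp add: algebra_simps)
qed simp

lemma annihilated_shift_diff: "annihilated ms g \<Longrightarrow> annihilated ms (\<lambda>s. g (Suc s) - m * g s)"
proof (induction ms arbitrary: g)
  case (Cons m' ms)
  then have "annihilated ms (\<lambda>s. (g (Suc (Suc s)) - m' * g (Suc s)) - m * (g (Suc s) - m' * g s))"
    by simp
  then show ?case by (simp add: algebra_simps)
qed simp

lemma annihilated_subsequence_squares:
  "annihilated ls f \<Longrightarrow> annihilated (map (\<lambda>l. l\<^sup>2) ls) (\<lambda>s. f (2 * s + r))"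
proof (induction ls arbitrary: f)
  case (Cons l ls)
  \<comment> \<open>\<open>E\<^sup>2 - l\<^sup>2 = (E + l) (E - l)\<close>\<close>
  from Cons.prems have "annihilated ls (\<lambda>s. f (Suc s) - l * f s)" by simp
  then have "annihilated ls (\<lambda>s. (f (Suc (Suc s)) - l * f (Suc s)) - (- l) * (f (Suc s) - l * f s))"
    by (rule annihilated_shift_diff)
  then have "annihilated ls (\<lambda>s. f (Suc (Suc s)) - l\<^sup>2 * f s)"
    by (simp add: algebra_simps power2_eq_square)
  from Cons.IH[OF this] show ?case by simp
qed simp

definition sign_alternating :: "(nat \<Rightarrow> real) \<Rightarrow> nat \<Rightarrow> (nat \<Rightarrow> nat) \<Rightarrow> bool" where
  "sign_alternating g k a \<longleftrightarrow> (\<forall>i<k. a i < a (Suc i)) \<and> (\<forall>i\<le>k. 0 \<le> (-1)^i * g (a i))"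

lemma sign_alternating_mult_pos:
  assumes "sign_alternating g k a" and "\<And>s. 0 < c s"
  shows "sign_alternating (\<lambda>s. c s * g s) k a"
proof -
  have "0 \<le> c (a i) * ((-1)^i * g (a i))" if "i \<le> k" for i
    using assms that unfolding sign_alternating_def by (simp add: less_imp_le)
  then show ?thesis using assms(1) unfolding sign_alternating_def by (simp add: algebra_simps)
qed

lemma sign_alternating_differences:
  assumes "sign_alternating u (Suc k) a"
  obtains b where "sign_alternating (\<lambda>j. u j - u (Suc j)) k b"
proof -
  have "\<exists>j. a i \<le> j \<and> j < a (Suc i) \<and> 0 \<le> (-1)^i * (u j - u (Suc j))" if i: "i \<le> k" for i
  proof (rule ccontr)
    assume "\<not> ?thesis"
    then have pos: "0 < (-1)^i * (u (Suc j) - u j)" if "j \<in> {a i..<a (Suc i)}" for j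
      using that by (force simp: right_diff_distrib)
    have lt: "a i < a (Suc i)" using assms i unfolding sign_alternating_def by simp
    have "0 < (\<Sum>j = a i..<a (Suc i). (-1)^i * (u (Suc j) - u j))"
      using lt pos by (intro sum_pos) auto
    also have "\<dots> = (-1)^i * (u (a (Suc i)) - u (a i))"
      using lt by (simp add: sum_distrib_left[symmetric] sum_Suc_diff')
    finally have "0 < (-1)^i * (u (a (Suc i)) - u (a i))" .
    moreover have "0 \<le> (-1)^i * u (a i)" "0 \<le> (-1)^(Suc i) * u (a (Suc i))"
      using assms i unfolding sign_alternating_def by auto
    ultimately show False by (simp add: algebra_simps)
  qed
  then obtain b where b: "\<And>i. i \<le> k \<Longrightarrow>
      a i \<le> b i \<and> b i < a (Suc i) \<and> 0 \<le> (-1)^i * (u (b i) - u (Suc (b i)))"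
    by metis
  have "b i < b (Suc i)" if "i < k" for i
    using b[of i] b[of "Suc i"] that by auto
  with b have "sign_alternating (\<lambda>j. u j - u (Suc j)) k b"
    unfolding sign_alternating_def by auto
  then show thesis by (rule that)
qed

lemma annihilated_sign_alternating_eq_0:
  assumes "\<forall>m\<in>set ms. 0 < m" and "annihilated ms g" and "sign_alternating g (length ms) a"
  shows "g s = 0"
  using assms
proof (induction ms arbitrary: g a s)
  case (Cons m ms)
  define h where "h = (\<lambda>s. g (Suc s) - m * g s)"
  have m: "0 < m" using Cons.prems(1) by simp
  \<comment> \<open>Dividing by \<open>m\<^sup>s\<close> turns \<open>h\<close> into a difference sequence, to which the
    discrete Rolle lemma applies.\<close>
  define u where "u = (\<lambda>s. g s / m^s)"
  have "sign_alternating u (Suc (length ms)) a"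
    using sign_alternating_mult_pos[OF Cons.prems(3), of "\<lambda>s. 1 / m^s"] m by (simp add: u_def)
  then obtain b where "sign_alternating (\<lambda>j. u j - u (Suc j)) (length ms) b"
    by (rule sign_alternating_differences)
  then have "sign_alternating (\<lambda>j. m^Suc j * (u j - u (Suc j))) (length ms) b"
    by (rule sign_alternating_mult_pos) (use m in simp)
  moreover have "m^Suc j * (u j - u (Suc j)) = - h j" for j
    using m by (simp add: u_def h_def field_simps)
  ultimately have "sign_alternating (\<lambda>j. - h j) (length ms) b" by simp
  moreover have "annihilated ms (\<lambda>j. - h j)"
    using annihilated_smult[of ms h "-1"] Cons.prems(2) by (simp add: h_def)
  ultimately have "- h s = 0" for s using Cons.IH[of "\<lambda>j. - h j" b s] Cons.prems(1) by simp
  then have step: "g (Suc s) = m * g s" for s by (simp add: h_def)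
  have geometric: "g s = m^s * g 0" for s by (induction s) (simp_all add: step)
  \<comment> \<open>So \<open>g\<close> is geometric with positive ratio, yet changes sign between \<open>a 0\<close> and \<open>a 1\<close>.\<close>
  have "0 \<le> g (a 0)" "g (a 1) \<le> 0"
    using Cons.prems(3) unfolding sign_alternating_def by (auto dest: spec[of _ 1])
  then have "0 \<le> m ^ a 0 * g 0" "m ^ a 1 * g 0 \<le> 0"
    unfolding geometric[of "a 0"] geometric[of "a 1"] .
  moreover have "0 < m ^ a 0" "0 < m ^ a 1" using m by simp_all
  ultimately have "g 0 = 0" by (simp add: zero_le_mult_iff mult_le_0_iff)
  then show ?case using geometric[of s] by simp
qed simp

lemma annihilated_eq_0_if_zeros:
  assumes pos: "\<forall>m\<in>set ms. 0 < m" and g: "annihilated ms g"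
    and Z: "finite Z" "length ms \<le> card Z" and zeros: "\<And>z. z \<in> Z \<Longrightarrow> g z = 0"
  shows "g s = 0"
proof (rule ccontr)
  assume nonzero: "g s \<noteq> 0"
  obtain Z' where Z': "Z' \<subseteq> Z" "card Z' = length ms"
    using obtain_subset_with_card_n[OF Z(2)] by blast
  have "finite Z'" "s \<notin> Z'" using Z' Z(1) zeros nonzero finite_subset by auto
  \<comment> \<open>Zeros have either sign, so \<open>\<plusminus>g\<close> alternates weakly along the sorted points
    of \<open>Z' \<union> {s}\<close>.\<close>
  define S where "S = insert s Z'"
  have "finite S" "card S = Suc (length ms)"
    using \<open>finite Z'\<close> \<open>s \<notin> Z'\<close> Z'(2) by (simp_all add: S_def)
  define xs where "xs = sorted_list_of_set S"
  have xs: "sorted_wrt (<) xs" "distinct xs" "length xs = Suc (length ms)" "set xs = S"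
    using \<open>finite S\<close> \<open>card S = _\<close> by (simp_all add: xs_def)
  then obtain i where i: "i < length xs" "xs ! i = s" by (metis S_def insertI1 in_set_conv_nth)
  define \<sigma> where "\<sigma> = (-1)^i * g s"
  have "sign_alternating (\<lambda>z. \<sigma> * g z) (length ms) (nth xs)"
    unfolding sign_alternating_def
  proof (intro conjI allI impI)
    show "xs ! j < xs ! Suc j" if "j < length ms" for j
      using sorted_wrt_nth_less[OF xs(1)] that xs(3) by simp
    show "0 \<le> (-1)^j * (\<sigma> * g (xs ! j))" if "j \<le> length ms" for j
    proof (cases "j = i")
      case True
      then have "(-1)^j * (\<sigma> * g (xs ! j)) = \<sigma>\<^sup>2"
        using i by (simp add: \<sigma>_def power2_eq_square)
      then show ?thesis by simp
    next
      case False
      have "j < length xs" using that xs(3) by simp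
      then have "xs ! j \<noteq> s" "xs ! j \<in> set xs"
        using False i nth_eq_iff_index_eq[OF xs(2), of j i] by simp_all
      then have "xs ! j \<in> Z" using xs(4) Z'(1) by (auto simp: S_def)
      then show ?thesis using zeros by simp
    qed
  qed
  then have "\<sigma> * g s = 0"
    by (rule annihilated_sign_alternating_eq_0[OF pos annihilated_smult[OF g]])
  then show False using nonzero by (simp add: \<sigma>_def)
qed

definition output_seq :: "real mat \<Rightarrow> real mat \<Rightarrow> real vec \<Rightarrow> nat \<Rightarrow> real" where
  "output_seq M C w s = (C * M ^\<^sub>m s *\<^sub>v w) $ 0"

lemma output_seq_eq_scalar_prod:
  assumes "C \<in> carrier_mat 1 n"
  shows "output_seq M C w s = row (C * M ^\<^sub>m s) 0 \<bullet> w"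
  using assms by (simp add: output_seq_def)

lemma output_seq_Suc:
  assumes M: "M \<in> carrier_mat n n" and C: "C \<in> carrier_mat 1 n" and w: "w \<in> carrier_vec n"
  shows "output_seq M C w (Suc s) = output_seq M C (M *\<^sub>v w) s"
proof -
  have "C * M ^\<^sub>m Suc s = (C * M ^\<^sub>m s) * M" using M C by (simp add: assoc_mult_mat[of _ 1 n _ n])
  then have "C * M ^\<^sub>m Suc s *\<^sub>v w = (C * M ^\<^sub>m s) *\<^sub>v (M *\<^sub>v w)"
    using M C w by (simp add: assoc_mult_mat_vec[of _ 1 n M n])
  then show ?thesis by (simp add: output_seq_def)
qed

lemma output_seq_shift_diff:
  assumes M: "M \<in> carrier_mat n n" and C: "C \<in> carrier_mat 1 n" and w: "w \<in> carrier_vec n"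
  shows "output_seq M C ((M - \<mu> \<cdot>\<^sub>m 1\<^sub>m n) *\<^sub>v w) s
    = output_seq M C w (Suc s) - \<mu> * output_seq M C w s"
proof -
  have "(M - \<mu> \<cdot>\<^sub>m 1\<^sub>m n) *\<^sub>v w = M *\<^sub>v w - \<mu> \<cdot>\<^sub>v w"
    using M w by (auto simp: minus_mult_distrib_mat_vec)
  moreover have r: "row (C * M ^\<^sub>m s) 0 \<in> carrier_vec n" using M C by (simp add: row_def)
  ultimately show ?thesis
    unfolding output_seq_Suc[OF M C w] unfolding output_seq_eq_scalar_prod[OF C]
    using M w by (simp add: scalar_prod_minus_distrib[OF r] scalar_prod_smult_distrib[OF r])
qed

fun apply_linear_factors :: "real mat \<Rightarrow> real list \<Rightarrow> real vec \<Rightarrow> real vec" where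
  "apply_linear_factors M [] w = w"
| "apply_linear_factors M (m # ms) w =
    apply_linear_factors M ms ((M - m \<cdot>\<^sub>m 1\<^sub>m (dim_row M)) *\<^sub>v w)"

lemma annihilated_output_seq:
  assumes M: "M \<in> carrier_mat n n" and C: "C \<in> carrier_mat 1 n"
  shows "w \<in> carrier_vec n \<Longrightarrow> apply_linear_factors M ms w = 0\<^sub>v n
    \<Longrightarrow> annihilated ms (output_seq M C w)"
proof (induction ms arbitrary: w)
  case Nil
  then show ?case using M C by (simp add: output_seq_eq_scalar_prod row_def)
next
  case (Cons m ms)
  have "(M - m \<cdot>\<^sub>m 1\<^sub>m n) *\<^sub>v w \<in> carrier_vec n"
    using M Cons.prems(1)
    by (metis minus_carrier_mat one_carrier_mat smult_carrier_mat mult_mat_vec_carrier)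
  then have "annihilated ms (output_seq M C ((M - m \<cdot>\<^sub>m 1\<^sub>m n) *\<^sub>v w))"
    using Cons M by simp
  moreover have "output_seq M C ((M - m \<cdot>\<^sub>m 1\<^sub>m n) *\<^sub>v w)
      = (\<lambda>s. output_seq M C w (Suc s) - m * output_seq M C w s)"
    using output_seq_shift_diff[OF M C Cons.prems(1)] by (simp add: fun_eq_iff)
  ultimately show ?case by simp
qed

lemma upper_triangular_diag_factor_support:
  fixes T :: "'a :: comm_ring_1 mat"
  assumes T: "T \<in> carrier_mat n n" and ut: "upper_triangular T"
    and w: "w \<in> carrier_vec n" and supp: "\<And>j. k < j \<Longrightarrow> j < n \<Longrightarrow> w $ j = 0"
    and j: "k \<le> j" "j < n"
  shows "((T - T $$ (k, k) \<cdot>\<^sub>m 1\<^sub>m n) *\<^sub>v w) $ j = 0"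
proof -
  have "((T - T $$ (k, k) \<cdot>\<^sub>m 1\<^sub>m n) *\<^sub>v w) $ j
      = (\<Sum>l<n. (T - T $$ (k, k) \<cdot>\<^sub>m 1\<^sub>m n) $$ (j, l) * w $ l)"
    using T w j by (simp add: scalar_prod_def lessThan_atLeast0)
  also have "\<dots> = 0"
  proof (rule sum.neutral, intro ballI)
    fix l assume l: "l \<in> {..<n}"
    consider "k < l" | "l < j" | "l = k" "j = k" using j by linarith
    then show "(T - T $$ (k, k) \<cdot>\<^sub>m 1\<^sub>m n) $$ (j, l) * w $ l = 0"
    proof cases
      case 1
      then show ?thesis using supp l by simp
    next
      case 2
      then have "T $$ (j, l) = 0" using ut T j unfolding upper_triangular_def by simp
      then show ?thesis using 2 T j l by simp
    qed (use T j in simp)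
  qed
  finally show ?thesis .
qed

lemma upper_triangular_apply_diag_factors:
  assumes T: "T \<in> carrier_mat n n" and ut: "upper_triangular T"
  shows "k \<le> n \<Longrightarrow> w \<in> carrier_vec n \<Longrightarrow> (\<And>j. k \<le> j \<Longrightarrow> j < n \<Longrightarrow> w $ j = 0)
    \<Longrightarrow> apply_linear_factors T (rev (map (\<lambda>i. T $$ (i, i)) [0..<k])) w = 0\<^sub>v n"
proof (induction k arbitrary: w)
  case 0
  then show ?case by (auto intro!: eq_vecI)
next
  case (Suc k)
  let ?w' = "(T - T $$ (k, k) \<cdot>\<^sub>m 1\<^sub>m n) *\<^sub>v w"
  have "?w' \<in> carrier_vec n"
    using T Suc.prems(2)
    by (metis minus_carrier_mat one_carrier_mat smult_carrier_mat mult_mat_vec_carrier)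
  moreover have "?w' $ j = 0" if "k \<le> j" "j < n" for j
    using upper_triangular_diag_factor_support[OF T ut Suc.prems(2)] Suc.prems(3) that by simp
  ultimately have "apply_linear_factors T (rev (map (\<lambda>i. T $$ (i, i)) [0..<k])) ?w' = 0\<^sub>v n"
    using Suc.IH Suc.prems(1) by simp
  then show ?case using T by simp
qed

lemma output_seq_similar:
  assumes sim: "similar_mat_wit A T P Q" and A: "A \<in> carrier_mat n n"
    and C: "C \<in> carrier_mat 1 n" and v: "v \<in> carrier_vec n"
  shows "output_seq A C v s = output_seq T (C * P) (Q *\<^sub>v v) s"
proof -
  have T: "T \<in> carrier_mat n n" and P: "P \<in> carrier_mat n n" and Q: "Q \<in> carrier_mat n n"
    using sim A unfolding similar_mat_wit_def Let_def by auto
  have "C * A ^\<^sub>m s = C * (P * T ^\<^sub>m s * Q)" using similar_mat_wit_pow_id[OF sim] by simp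
  also have "\<dots> = C * P * T ^\<^sub>m s * Q"
    using C P T Q by (simp add: assoc_mult_mat[of _ 1 n _ n _ n])
  finally have "C * A ^\<^sub>m s *\<^sub>v v = C * P * T ^\<^sub>m s * Q *\<^sub>v v" by simp
  also have "\<dots> = (C * P * T ^\<^sub>m s) *\<^sub>v (Q *\<^sub>v v)"
    using C P T Q v by (intro assoc_mult_mat_vec) auto
  finally show ?thesis by (simp add: output_seq_def)
qed

lemma annihilated_output_seq_char_poly:
  assumes A: "A \<in> carrier_mat n n" and C: "C \<in> carrier_mat 1 n" and v: "v \<in> carrier_vec n"
    and ls: "char_poly A = (\<Prod>l\<leftarrow>ls. [:- l, 1:])"
  shows "annihilated (rev ls) (output_seq A C v)"
proof -
  obtain T P Q where "schur_decomposition A ls = (T, P, Q)"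
    by (cases "schur_decomposition A ls") auto
  from schur_decomposition[OF A ls this]
  have sim: "similar_mat_wit A T P Q" and ut: "upper_triangular T" and diag: "diag_mat T = ls"
    by auto
  have T: "T \<in> carrier_mat n n" and P: "P \<in> carrier_mat n n" and Q: "Q \<in> carrier_mat n n"
    using sim A unfolding similar_mat_wit_def Let_def by auto
  have "rev ls = rev (map (\<lambda>i. T $$ (i, i)) [0..<n])" using diag T by (simp add: diag_mat_def)
  then have "apply_linear_factors T (rev ls) (Q *\<^sub>v v) = 0\<^sub>v n"
    using upper_triangular_apply_diag_factors[OF T ut, of n "Q *\<^sub>v v"] Q v by simp
  then have "annihilated (rev ls) (output_seq T (C * P) (Q *\<^sub>v v))"
    using annihilated_output_seq[OF T, of "C * P"] C P Q v by simp
  moreover have "output_seq A C v = output_seq T (C * P) (Q *\<^sub>v v)"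
    using output_seq_similar[OF sim A C v] by (simp add: fun_eq_iff)
  ultimately show ?thesis by simp
qed

interpretation of_real_poly_hom: map_poly_inj_idom_hom "of_real :: real \<Rightarrow> complex" ..

lemma char_poly_real_factorization:
  fixes A :: "real mat"
  assumes A: "A \<in> carrier_mat n n"
    and real_spectrum: "\<And>\<mu>::complex. eigenvalue (map_mat complex_of_real A) \<mu> \<Longrightarrow> \<mu> \<in> \<real>"
  obtains ls where "char_poly A = (\<Prod>l\<leftarrow>ls. [:- l, 1:])" and "length ls = n"
proof -
  let ?A = "map_mat complex_of_real A"
  have A': "?A \<in> carrier_mat n n" using A by simp
  obtain as where as: "char_poly ?A = (\<Prod>a\<leftarrow>as. [:- a, 1:])" "length as = n"
    using char_poly_factorized[OF A'] by blast
  have "a \<in> \<real>" if "a \<in> set as" for a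
    using real_spectrum eigenvalue_root_char_poly[OF A'] linear_poly_root[OF that] as(1) by metis
  then have factors: "map (\<lambda>a. [:- a, 1:]) as = map (\<lambda>l. map_poly of_real [:- l, 1:]) (map Re as)"
    by (auto simp: complex_is_Real_iff complex_eq_iff)
  have "map_poly complex_of_real (\<Prod>l\<leftarrow>map Re as. [:- l, 1:])
      = (\<Prod>l\<leftarrow>map Re as. map_poly of_real [:- l, 1:])"
    unfolding of_real_poly_hom.hom_prod_list map_map comp_def ..
  also have "\<dots> = char_poly ?A" unfolding as(1) factors ..
  also have "\<dots> = map_poly of_real (char_poly A)" by (rule of_real_hom.char_poly_hom[OF A])
  finally have "(\<Prod>l\<leftarrow>map Re as. [:- l, 1:]) = char_poly A" by (simp only: of_real_poly_hom.eq_iff)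
  then show thesis using that[of "map Re as"] as(2) by simp
qed

lemma char_poly_root_nonzero:
  fixes A :: "real mat"
  assumes A: "A \<in> carrier_mat n n" and ls: "char_poly A = (\<Prod>l\<leftarrow>ls. [:- l, 1:])"
    and no_zero_eigenvalue: "\<And>\<mu>::complex. eigenvalue (map_mat complex_of_real A) \<mu> \<Longrightarrow> \<mu> \<noteq> 0"
    and l: "l \<in> set ls"
  shows "l \<noteq> 0"
proof -
  have "eigenvalue A l" using eigenvalue_root_char_poly[OF A] linear_poly_root[OF l] ls by metis
  then show ?thesis using no_zero_eigenvalue of_real_hom.eigenvalue_hom[OF A] by force
qed

lemma kernel_trivial_if_no_zero_eigenvalue:
  fixes A :: "real mat"
  assumes A: "A \<in> carrier_mat n n"
    and no_zero_eigenvalue: "\<And>\<mu>::complex. eigenvalue (map_mat complex_of_real A) \<mu> \<Longrightarrow> \<mu> \<noteq> 0"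
    and v: "v \<in> carrier_vec n" and Av: "A *\<^sub>v v = 0\<^sub>v n"
  shows "v = 0\<^sub>v n"
proof (rule ccontr)
  assume "v \<noteq> 0\<^sub>v n"
  moreover have "A *\<^sub>v v = 0 \<cdot>\<^sub>v v" using Av v by auto
  ultimately have "eigenvalue A 0" unfolding eigenvalue_def eigenvector_def using A v by blast
  then show False using no_zero_eigenvalue of_real_hom.eigenvalue_hom[OF A] by force
qed

context vec_space
begin

lemma kernel_trivial_if_full_rank:
  assumes A: "A \<in> carrier_mat n n" and rank: "rank A = n"
    and v: "v \<in> carrier_vec n" and Av: "A *\<^sub>v v = 0\<^sub>v n"
  shows "v = 0\<^sub>v n"
proof (rule ccontr)
  assume "v \<noteq> 0\<^sub>v n"
  have "distinct (cols A)" using non_distinct_low_rank[OF A] rank by fastforce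
  then have "lin_indpt (set (cols A))" and "lin_dep (set (cols A))"
    using full_rank_lin_indpt[OF A rank] lin_depI[OF A v \<open>v \<noteq> 0\<^sub>v n\<close> Av] by auto
  then show False by simp
qed

lemma full_rank_if_kernel_trivial:
  fixes A :: "'a mat"
  assumes A: "A \<in> carrier_mat n nc"
    and kernel: "\<And>v :: 'a vec. v \<in> carrier_vec nc \<Longrightarrow> A *\<^sub>v v = 0\<^sub>v n \<Longrightarrow> v = 0\<^sub>v nc"
  shows "rank A = nc"
proof -
  have "distinct (cols A)"
  proof (rule ccontr)
    assume "\<not> distinct (cols A)"
    then obtain i j where ij: "i < nc" "j < nc" "i \<noteq> j" "col A i = col A j"
      using A by (auto simp: distinct_conv_nth)
    define v :: "'a vec" where "v = unit_vec nc i - unit_vec nc j"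
    have unit: "A *\<^sub>v unit_vec nc k = col A k" if "k < nc" for k
      using A that by (intro eq_vecI) auto
    have "A *\<^sub>v v = 0\<^sub>v n"
      using A ij unit by (auto simp: v_def mult_minus_distrib_mat_vec intro!: eq_vecI)
    then have "v = 0\<^sub>v nc" using kernel by (simp add: v_def)
    moreover have "v $ i = 1" using ij by (simp add: v_def)
    ultimately show False using ij by simp
  qed
  moreover have "lin_indpt (set (cols A))"
  proof
    assume "lin_dep (set (cols A))"
    from lin_depE[OF A this \<open>distinct (cols A)\<close>] show False using kernel by metis
  qed
  ultimately show ?thesis using lin_indpt_full_rank[OF A] by blast
qed

end

lemma sample_obs_mat_carrier: "M \<in> carrier_mat n n \<Longrightarrow> sample_obs_mat M C l t \<in> carrier_mat l n"
  unfolding sample_obs_mat_def by auto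

lemma sample_obs_mat_mult_vec:
  assumes M: "M \<in> carrier_mat n n" and C: "C \<in> carrier_mat 1 n" and i: "i < l"
  shows "(sample_obs_mat M C l t *\<^sub>v v) $ i = output_seq M C v (t i)"
proof -
  have "row (C * M ^\<^sub>m t i) 0 \<in> carrier_vec n" using M C by (simp add: row_def)
  then have "row (sample_obs_mat M C l t) i = row (C * M ^\<^sub>m t i) 0"
    using M i by (simp add: sample_obs_mat_def)
  then show ?thesis using C i by (simp add: output_seq_eq_scalar_prod sample_obs_mat_def)
qed

lemma observable_pair_zero_state:
  assumes M: "M \<in> carrier_mat n n" and C: "C \<in> carrier_mat 1 n" and obs: "observable_pair M C"
    and w: "w \<in> carrier_vec n" and zeros: "\<And>s. s < n \<Longrightarrow> output_seq M C w s = 0"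
  shows "w = 0\<^sub>v n"
proof (rule vec_space.kernel_trivial_if_full_rank[OF sample_obs_mat_carrier[OF M] _ w])
  show "vec_space.rank n (sample_obs_mat M C n (\<lambda>k. k)) = n"
    using obs M by (simp add: observable_pair_def mat_rank_def sample_obs_mat_def)
  show "sample_obs_mat M C n (\<lambda>k. k) *\<^sub>v w = 0\<^sub>v n"
    using zeros sample_obs_mat_mult_vec[OF M C, of _ n "\<lambda>k. k" w]
      sample_obs_mat_carrier[OF M, of C n "\<lambda>k. k"]
    by (intro eq_vecI) auto
qed

lemma pow_mat_double:
  assumes A: "A \<in> carrier_mat n n"
  shows "A ^\<^sub>m (2 * s) = (A ^\<^sub>m 2) ^\<^sub>m s"
proof (induction s)
  case (Suc s)
  have "A ^\<^sub>m (2 * Suc s) = A ^\<^sub>m (2 * s) * (A * A)"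
    using A by (simp add: numeral_2_eq_2 assoc_mult_mat[of _ n n A n A n])
  then show ?case using Suc.IH A by (simp add: numeral_2_eq_2)
qed simp

lemma output_seq_square:
  assumes "A \<in> carrier_mat n n"
  shows "output_seq (A ^\<^sub>m 2) C w s = output_seq A C w (2 * s)"
  using pow_mat_double[OF assms] by (simp add: output_seq_def)

lemma observable_square_zero_state:
  fixes A :: "real mat"
  assumes A: "A \<in> carrier_mat n n" and C: "C \<in> carrier_mat 1 n"
    and obs: "observable_pair (A ^\<^sub>m 2) C"
    and no_zero_eigenvalue: "\<And>\<mu>::complex. eigenvalue (map_mat complex_of_real A) \<mu> \<Longrightarrow> \<mu> \<noteq> 0"
    and v: "v \<in> carrier_vec n" and r: "r < 2" and zeros: "\<And>s. output_seq A C v (2 * s + r) = 0"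
  shows "v = 0\<^sub>v n"
proof -
  have even_zeros: "w = 0\<^sub>v n" if "w \<in> carrier_vec n" "\<And>s. output_seq A C w (2 * s) = 0" for w
    using observable_pair_zero_state[of "A ^\<^sub>m 2" n C w] A C obs that
    by (simp add: output_seq_square)
  show ?thesis
  proof (cases "r = 0")
    case True
    then show ?thesis using even_zeros[OF v] zeros by simp
  next
    case False
    then have "r = 1" using r by simp
    then have "output_seq A C (A *\<^sub>v v) (2 * s) = 0" for s
      using zeros[of s] output_seq_Suc[OF A C v, of "2 * s"] by simp
    then have "A *\<^sub>v v = 0\<^sub>v n" using even_zeros A v by simp
    then show ?thesis using kernel_trivial_if_no_zero_eigenvalue[OF A no_zero_eigenvalue v] by blast
  qed
qed

lemma finite_parity_class:
  fixes S :: "nat set"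
  assumes "finite S"
  shows "finite {s. 2 * s + r \<in> S}"
  using finite_vimageI[OF assms, of "\<lambda>s. 2 * s + r"] by (simp add: inj_on_def vimage_def)

lemma card_eq_card_evens_plus_odds:
  fixes S :: "nat set"
  assumes "finite S"
  shows "card S = card {s. 2 * s \<in> S} + card {s. 2 * s + 1 \<in> S}"
proof -
  have "x \<in> (\<lambda>s. 2 * s) ` {s. 2 * s \<in> S} \<union> (\<lambda>s. 2 * s + 1) ` {s. 2 * s + 1 \<in> S}"
    if "x \<in> S" for x
    using that by (cases "even x") (auto elim!: evenE oddE)
  then have S: "S = (\<lambda>s. 2 * s) ` {s. 2 * s \<in> S} \<union> (\<lambda>s. 2 * s + 1) ` {s. 2 * s + 1 \<in> S}"
    by auto
  have "card S = card ((\<lambda>s. 2 * s) ` {s. 2 * s \<in> S}) + card ((\<lambda>s. 2 * s + 1) ` {s. 2 * s + 1 \<in> S})"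
    using finite_parity_class[OF assms, of 0] finite_parity_class[OF assms, of 1]
    by (subst S, intro card_Un_disjoint) (auto, presburger)
  then show ?thesis by (simp add: card_image inj_on_def)
qed

lemma card_parity_class_ge:
  fixes S :: "nat set"
  assumes "finite S" and "2 * n \<le> Suc (card S)"
  obtains r where "r < 2" and "n \<le> card {s. 2 * s + r \<in> S}"
proof -
  have "n \<le> card {s. 2 * s \<in> S} \<or> n \<le> card {s. 2 * s + 1 \<in> S}"
    using card_eq_card_evens_plus_odds[OF assms(1)] assms(2) by linarith
  then show thesis using that[of 0] that[of 1] by auto
qed

theorem theorem1:
  fixes A C :: "real mat" and n :: nat and t :: "nat \<Rightarrow> nat"
  assumes "n \<ge> 1"
    and "A \<in> carrier_mat n n" and "C \<in> carrier_mat 1 n"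
    and "observable_pair A C"
    and "\<And>\<mu>::complex. eigenvalue (map_mat complex_of_real A) \<mu> \<Longrightarrow> \<mu> \<noteq> 0"
    and "\<And>\<mu>::complex. eigenvalue (map_mat complex_of_real A) \<mu> \<Longrightarrow> \<mu> \<in> \<real>"
    and "observable_pair (A ^\<^sub>m 2) C"
    and "inj_on t {..<2 * n - 1}"
  shows "mat_rank (sample_obs_mat A C (2 * n - 1) t) = n"
proof -
  note A = assms(2) and C = assms(3)
  obtain ls where ls: "char_poly A = (\<Prod>l\<leftarrow>ls. [:- l, 1:])" "length ls = n"
    by (rule char_poly_real_factorization[OF A assms(6)])
  define ms where "ms = map (\<lambda>l. l\<^sup>2) (rev ls)"
  have ms: "\<forall>m\<in>set ms. 0 < m" "length ms = n"
    using char_poly_root_nonzero[OF A ls(1) assms(5)] ls(2) by (auto simp: ms_def)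
  let ?O = "sample_obs_mat A C (2 * n - 1) t"
  have "v = 0\<^sub>v n" if v: "v \<in> carrier_vec n" and Ov: "?O *\<^sub>v v = 0\<^sub>v (2 * n - 1)" for v
  proof -
    let ?S = "t ` {..<2 * n - 1}"
    have "finite ?S" "2 * n \<le> Suc (card ?S)" using card_image[OF assms(8)] by auto
    then obtain r where r: "r < 2" "n \<le> card {s. 2 * s + r \<in> ?S}"
      by (rule card_parity_class_ge)
    have "output_seq A C v (t i) = 0" if "i < 2 * n - 1" for i
      using sample_obs_mat_mult_vec[OF A C that] arg_cong[OF Ov, of "\<lambda>x. x $ i"] that by simp
    then have zeros: "output_seq A C v (2 * z + r) = 0" if "z \<in> {s. 2 * s + r \<in> ?S}" for z
      using that by auto
    have "annihilated ms (\<lambda>s. output_seq A C v (2 * s + r))"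
      unfolding ms_def using annihilated_output_seq_char_poly[OF A C v ls(1)]
      by (rule annihilated_subsequence_squares)
    from annihilated_eq_0_if_zeros[OF ms(1) this finite_parity_class[OF \<open>finite ?S\<close>] _ zeros]
    have "output_seq A C v (2 * s + r) = 0" for s using r(2) ms(2) by simp
    then show ?thesis using observable_square_zero_state[OF A C assms(7,5) v r(1)] by blast
  qed
  then have "vec_space.rank (2 * n - 1) ?O = n"
    by (intro vec_space.full_rank_if_kernel_trivial[OF sample_obs_mat_carrier[OF A]])
  then show ?thesis by (simp add: mat_rank_def sample_obs_mat_def)
qed

end
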